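(* With the construction of the context (fixed $\beta>0$, $\alpha,\xi>0$, $\varphi$, $A$, $\omega$, and a positive even integer $D$), for all $\theta,\theta'\in\{0,1\}^D$, $$\mathrm{KL}(f_\theta,f_{\theta'})=\int f_\theta\ln\frac{f_\theta}{f_{\theta'}}\le\frac{5\xi\alpha}{4A^2}D^{-2\beta}.$$
   Context: $\psi(x)=\pi^{-1/2}e^{-x^2}$. For $\beta>0$, $r$ is the largest integer strictly less than $\beta$; $\mathcal{H}(\beta,\mathcal P)$ for $\mathcal{P}=\{\gamma,l^+,L,\varepsilon,C,\alpha,\xi,M\}$ is the set of probability densities $f$ with $\ln f$ $r$ times differentiable, $|(\ln f)^{(r)}(x)-(\ln f)^{(r)}(y)|\le r!L(x)|y-x|^{\beta-r}$ for $|x-y|\le\gamma$, $|(\ln f)^{(j)}(0)|\le l^+$; $\int|(\ln f)^{(j)}|^{(2\beta+\varepsilon)/j}f\le C$, $\int|L|^{2+\varepsilon/\beta}f\le C$; $f\le M\psi$; $f>0$ nondecreasing on $(-\infty,-\alpha)$, nonincreasing on $(\alpha,\infty)$, $f\ge\xi$ on $[-\alpha,\alpha]$. Construction: $\varphi$ infinitely differentiable, supported in $(1/4,3/4)$, $\int\varphi=0$, $\int\varphi^2=1$; $A=\max_{0\le k\le r+1}\|\varphi^{(k)}\|_\infty>1$; $\varphi_j(x)=\frac{\xi D^{-\beta}}{A}\varphi\big(\frac D\alpha(x+\frac\alpha2)-(j-1)\big)$, $j=1..D$. $\omega\in\mathcal{T}(\alpha,\xi)\cap\mathcal H(\beta,\tilde{\mathcal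 P})$ where $\mathcal{T}(\alpha,\xi)$ is the set of $\omega:\mathbb R\to\mathbb R^+$ nondecreasing on $(-\infty,-\alpha/2)$, nonincreasing on $(\alpha/2,\infty)$, $\omega=2\xi$ on $[-3\alpha/4,3\alpha/4]$, $\omega(\pm\alpha)=\xi$, and $\tilde{\mathcal P}=\{\alpha/4,\ln(2\xi),\tilde L,\tilde\varepsilon,\tilde C,\alpha,\xi,\tilde M\}$. $f_\theta=\omega+\sum_{j=1}^D(2\theta_j-1)\varphi_j$. *)

theory Defs
  imports "HOL-Analysis.Analysis"
begin

definition psi :: "real \<Rightarrow> real" where
  "psi x = exp (- x\<^sup>2) / sqrt pi"

text \<open>r = largest integer strictly less than beta (for beta > 0).\<close>
definition hr :: "real \<Rightarrow> nat" where
  "hr \<beta> = nat (\<lceil>\<beta>\<rceil> - 1)"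

abbreviation nderiv :: "nat \<Rightarrow> (real \<Rightarrow> real) \<Rightarrow> real \<Rightarrow> real" where
  "nderiv j g \<equiv> (deriv ^^ j) g"

definition k_times_differentiable :: "nat \<Rightarrow> (real \<Rightarrow> real) \<Rightarrow> bool" where
  "k_times_differentiable k g \<longleftrightarrow> (\<forall>j<k. \<forall>x. nderiv j g differentiable (at x))"

definition infinitely_differentiable :: "(real \<Rightarrow> real) \<Rightarrow> bool" where
  "infinitely_differentiable g \<longleftrightarrow> (\<forall>k. k_times_differentiable k g)"

definition H_class ::
  "real \<Rightarrow> real \<Rightarrow> real \<Rightarrow> (real \<Rightarrow> real) \<Rightarrow> real \<Rightarrow> real \<Rightarrow> real \<Rightarrow> real \<Rightarrow> real
     \<Rightarrow> (real \<Rightarrow> real) set" where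
  "H_class \<beta> \<gamma> lp L \<epsilon> C \<alpha> \<xi> M =
    {f. f \<in> borel_measurable borel \<and> (\<forall>x. 0 \<le> f x) \<and>
        (\<integral>\<^sup>+ x. ennreal (f x) \<partial>lborel) = 1 \<and>
        (let l = (\<lambda>x. ln (f x)); r = hr \<beta> in
          k_times_differentiable r l \<and>
          (\<forall>x y. \<bar>x - y\<bar> \<le> \<gamma> \<longrightarrow>
              \<bar>nderiv r l x - nderiv r l y\<bar> \<le> fact r * L x * \<bar>y - x\<bar> powr (\<beta> - real r)) \<and>
          (\<forall>j\<in>{1..r}. \<bar>nderiv j l 0\<bar> \<le> lp) \<and>
          (\<forall>j\<in>{1..r}. (\<integral>\<^sup>+ x. ennreal (\<bar>nderiv j l x\<bar> powr ((2*\<beta> + \<epsilon>) / real j) * f x) \<partial>lborel)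
                          \<le> ennreal C) \<and>
          (\<integral>\<^sup>+ x. ennreal (\<bar>L x\<bar> powr (2 + \<epsilon> / \<beta>) * f x) \<partial>lborel) \<le> ennreal C) \<and>
        (\<forall>x. f x \<le> M * psi x) \<and>
        (\<forall>x. x < - \<alpha> \<longrightarrow> 0 < f x) \<and> (\<forall>x. \<alpha> < x \<longrightarrow> 0 < f x) \<and>
        mono_on {..< - \<alpha>} f \<and> antimono_on {\<alpha> <..} f \<and>
        (\<forall>x\<in>{- \<alpha> .. \<alpha>}. \<xi> \<le> f x)}"

definition T_class :: "real \<Rightarrow> real \<Rightarrow> (real \<Rightarrow> real) set" where
  "T_class \<alpha> \<xi> =
    {\<omega>. (\<forall>x. 0 \<le> \<omega> x) \<and> mono_on {..< - \<alpha> / 2} \<omega> \<and> antimono_on {\<alpha> / 2 <..} \<omega> \<and>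
         (\<forall>x\<in>{- 3 * \<alpha> / 4 .. 3 * \<alpha> / 4}. \<omega> x = 2 * \<xi>) \<and>
         \<omega> \<alpha> = \<xi> \<and> \<omega> (- \<alpha>) = \<xi>}"

definition sup_norm :: "(real \<Rightarrow> real) \<Rightarrow> real" where
  "sup_norm g = (SUP x. \<bar>g x\<bar>)"

definition phi_j :: "(real \<Rightarrow> real) \<Rightarrow> real \<Rightarrow> real \<Rightarrow> real \<Rightarrow> real \<Rightarrow> nat \<Rightarrow> nat \<Rightarrow> real \<Rightarrow> real" where
  "phi_j \<phi> \<beta> \<alpha> \<xi> A D j x =
     \<xi> * real D powr (- \<beta>) / A * \<phi> (real D / \<alpha> * (x + \<alpha> / 2) - (real j - 1))"

definition f_theta :: "(real \<Rightarrow> real) \<Rightarrow> (real \<Rightarrow> real) \<Rightarrow> real \<Rightarrow> real \<Rightarrow> real \<Rightarrow> real \<Rightarrow> nat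
     \<Rightarrow> (nat \<Rightarrow> real) \<Rightarrow> real \<Rightarrow> real" where
  "f_theta \<omega> \<phi> \<beta> \<alpha> \<xi> A D \<theta> x =
     \<omega> x + (\<Sum>j=1..D. (2 * \<theta> j - 1) * phi_j \<phi> \<beta> \<alpha> \<xi> A D j x)"

definition KL :: "(real \<Rightarrow> real) \<Rightarrow> (real \<Rightarrow> real) \<Rightarrow> real" where
  "KL f g = (\<integral>x. f x * ln (f x / g x) \<partial>lborel)"

end

theory Submission
  imports Defs
begin

text \<open>
  The bumps \<open>\<phi>\<^sub>j\<close> have pairwise disjoint supports inside \<open>(-\<alpha>/2, \<alpha>/2)\<close>, where
  \<open>\<omega> = 2\<xi>\<close>, and \<open>|\<phi>\<^sub>j| \<le> \<xi>/4\<close> because the mean value theorem gives \<open>|\<phi>| \<le> A/4\<close>.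
  Hence at every point either \<open>f\<^sub>\<theta> = f\<^sub>\<theta>\<^sub>'\<close>, or \<open>f\<^sub>\<theta> = 2\<xi> + u\<close> and
  \<open>f\<^sub>\<theta>\<^sub>' = 2\<xi> - u\<close> with \<open>|u| \<le> \<xi>/4\<close>; in the latter case
  \<open>(2\<xi> + u) ln ((2\<xi> + u) / (2\<xi> - u)) \<le> 2u + 5u\<^sup>2/(4\<xi>)\<close>.
  The linear terms integrate to zero since \<open>\<integral>\<phi> = 0\<close>, and
  \<open>\<integral>\<phi>\<^sub>j\<^sup>2 = (\<xi>D\<^sup>-\<^sup>\<beta>/A)\<^sup>2 \<alpha>/D\<close>, so the \<open>D\<close> quadratic terms add up to the bound.
\<close>

lemma ln_le_half_sub_inverse:
  fixes y :: real
  assumes "1 \<le> y"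
  shows "ln y \<le> (y - 1 / y) / 2"
proof -
  let ?k = "\<lambda>z::real. (z - 1 / z) / 2 - ln z"
  have "?k 1 \<le> ?k y"
  proof (rule DERIV_nonneg_imp_increasing_open[OF assms])
    fix x :: real assume x: "1 < x" "x < y"
    have "DERIV ?k x :> ((1 + 1 / x\<^sup>2) / 2 - 1 / x)"
      using x by (auto intro!: derivative_eq_intros simp: power2_eq_square field_simps)
    moreover have "(1 + 1 / x\<^sup>2) / 2 - 1 / x = (1 - 1 / x)\<^sup>2 / 2"
      using x by (simp add: power2_eq_square field_simps)
    ultimately show "\<exists>d. DERIV ?k x :> d \<and> d \<ge> 0" by auto
  qed (intro continuous_intros; auto)
  then show ?thesis by simp
qed

lemma ln_le_two_sub_one_div_add_one:
  fixes y :: real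
  assumes "0 < y" "y \<le> 1"
  shows "ln y \<le> 2 * (y - 1) / (y + 1)"
proof -
  let ?k = "\<lambda>z::real. ln z - 2 * (z - 1) / (z + 1)"
  have "?k y \<le> ?k 1"
  proof (rule DERIV_nonneg_imp_increasing_open[OF assms(2)])
    fix x :: real assume x: "y < x" "x < 1"
    have "DERIV ?k x :> (1 / x - 4 / (x + 1)\<^sup>2)"
      using x assms by (auto intro!: derivative_eq_intros simp: power2_eq_square field_simps)
    moreover have "4 / (x + 1)\<^sup>2 \<le> 1 / x"
      using x assms sum_power2_ge_zero[of "x - 1" 0]
      by (simp add: divide_simps power2_eq_square algebra_simps)
    ultimately show "\<exists>d. DERIV ?k x :> d \<and> d \<ge> 0" by auto
  qed (use assms in \<open>intro continuous_intros; auto\<close>)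
  then show ?thesis by simp
qed

lemma mult_ln_ratio_bounds:
  fixes \<xi> u :: real
  assumes xi: "0 < \<xi>" and u: "\<bar>u\<bar> \<le> \<xi> / 4"
  shows "2 * u \<le> (2 * \<xi> + u) * ln ((2 * \<xi> + u) / (2 * \<xi> - u))"
    and "(2 * \<xi> + u) * ln ((2 * \<xi> + u) / (2 * \<xi> - u)) \<le> 2 * u + 5 / (4 * \<xi>) * u\<^sup>2"
proof -
  \<comment> \<open>For \<open>u \<ge> 0\<close> and \<open>u < 0\<close> the two logarithm bounds above leave the remainders
    \<open>2u\<^sup>2/(2\<xi> - u)\<close> and \<open>u\<^sup>2/\<xi>\<close>, both at most \<open>5u\<^sup>2/(4\<xi>)\<close> when \<open>|u| \<le> \<xi>/4\<close>.\<close>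
  define f where "f = 2 * \<xi> + u"
  define g where "g = 2 * \<xi> - u"
  have f: "f > 0" and g: "g > 0" using xi u by (auto simp: f_def g_def)
  have "ln (g / f) \<le> g / f - 1" using f g by (intro ln_le_minus_one) simp
  then have "f * (1 - g / f) \<le> f * ln (f / g)"
    using f g by (intro mult_left_mono) (auto simp: ln_div)
  moreover have "f * (1 - g / f) = 2 * u" using f by (simp add: field_simps f_def g_def)
  ultimately show "2 * u \<le> (2 * \<xi> + u) * ln ((2 * \<xi> + u) / (2 * \<xi> - u))"
    by (simp add: f_def g_def)
  have "f * ln (f / g) \<le> 2 * u + 5 / (4 * \<xi>) * u\<^sup>2"
  proof (cases "u \<ge> 0")
    case True
    then have "1 \<le> f / g" using g by (simp add: f_def g_def)
    from ln_le_half_sub_inverse[OF this]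
    have "f * ln (f / g) \<le> f * ((f / g - 1 / (f / g)) / 2)"
      using f by (intro mult_left_mono) auto
    also have "\<dots> = (f\<^sup>2 - g\<^sup>2) / (2 * g)"
      using f g by (simp add: field_simps power2_eq_square)
    also have "\<dots> = 2 * u + 2 * u\<^sup>2 / g"
      using g by (simp add: f_def g_def field_simps power2_eq_square algebra_simps)
    also have "2 * u\<^sup>2 / g \<le> 5 / (4 * \<xi>) * u\<^sup>2"
    proof -
      have "2 / g \<le> 5 / (4 * \<xi>)" using u True g xi by (simp add: g_def field_simps)
      then show ?thesis using mult_right_mono[of _ _ "u\<^sup>2"] by fastforce
    qed
    finally show ?thesis by simp
  next
    case False
    then have "f / g \<le> 1" using g by (simp add: f_def g_def)
    from ln_le_two_sub_one_div_add_one[OF _ this] f g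
    have "f * ln (f / g) \<le> f * (2 * (f / g - 1) / (f / g + 1))"
      by (intro mult_left_mono) auto
    also have "\<dots> = 2 * u + u\<^sup>2 / \<xi>"
      using f g xi by (simp add: f_def g_def field_simps power2_eq_square)
    also have "\<dots> \<le> 2 * u + 5 / (4 * \<xi>) * u\<^sup>2" using xi by (simp add: field_simps)
    finally show ?thesis .
  qed
  then show "(2 * \<xi> + u) * ln ((2 * \<xi> + u) / (2 * \<xi> - u)) \<le> 2 * u + 5 / (4 * \<xi>) * u\<^sup>2"
    by (simp add: f_def g_def)
qed

lemma infinitely_differentiable_imp_differentiable:
  assumes "infinitely_differentiable f"
  shows "f differentiable (at x)"
proof -
  have "k_times_differentiable 1 f"
    using assms unfolding infinitely_differentiable_def by (rule spec)
  then have "nderiv 0 f differentiable (at x)"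
    unfolding k_times_differentiable_def by blast
  then show ?thesis by simp
qed

lemma infinitely_differentiable_imp_continuous_deriv:
  assumes "infinitely_differentiable f"
  shows "continuous_on UNIV (deriv f)"
proof -
  have "k_times_differentiable 2 f"
    using assms unfolding infinitely_differentiable_def by (rule spec)
  then have "nderiv 1 f differentiable (at x)" for x
    unfolding k_times_differentiable_def by (rule allE[of _ 1]) simp
  then have "deriv f differentiable (at x)" for x by simp
  then show ?thesis
    by (intro continuous_at_imp_continuous_on ballI differentiable_imp_continuous_within)
qed

lemma deriv_eq_0_outside_closure_support:
  fixes f :: "real \<Rightarrow> real"
  assumes "y \<notin> closure {x. f x \<noteq> 0}"
  shows "deriv f y = 0"
proof -
  let ?U = "- closure {x. f x \<noteq> 0}"
  have "open ?U" by (rule open_Compl[OF closed_closure])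
  moreover have "y \<in> ?U" using assms by simp
  moreover have "0 = f z" if "z \<in> ?U" for z
  proof (rule ccontr)
    assume "0 \<noteq> f z"
    then have "z \<in> closure {x. f x \<noteq> 0}" by (intro subsetD[OF closure_subset]) simp
    with that show False by simp
  qed
  ultimately have "(f has_real_derivative 0) (at y)"
    by (rule has_field_derivative_transform_within_open[OF DERIV_const])
  then show ?thesis by (rule DERIV_imp_deriv)
qed

lemma bounded_range_deriv_if_compact_support:
  fixes f :: "real \<Rightarrow> real"
  assumes cont: "continuous_on UNIV (deriv f)" and compact: "compact (closure {x. f x \<noteq> 0})"
  shows "bounded (range (deriv f))"
proof -
  let ?S = "closure {x. f x \<noteq> 0}"
  have "bounded (insert 0 (deriv f ` ?S))"
    using compact_continuous_image[OF continuous_on_subset[OF cont] compact]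
    by (simp add: compact_imp_bounded)
  moreover have "range (deriv f) \<subseteq> insert 0 (deriv f ` ?S)"
  proof
    fix z assume "z \<in> range (deriv f)"
    then obtain y where "z = deriv f y" by blast
    then show "z \<in> insert 0 (deriv f ` ?S)"
      using deriv_eq_0_outside_closure_support[of y f] by (cases "y \<in> ?S") auto
  qed
  ultimately show ?thesis by (rule bounded_subset)
qed

lemma abs_le_sup_norm:
  fixes g :: "real \<Rightarrow> real"
  assumes "bounded (range g)"
  shows "\<bar>g z\<bar> \<le> sup_norm g"
proof -
  obtain B where "\<And>y. \<bar>g y\<bar> \<le> B"
    using assms unfolding bounded_iff by auto
  then show ?thesis
    unfolding sup_norm_def by (intro cSUP_upper bdd_aboveI2) auto
qed

lemma abs_le_half_width_sup_norm_deriv: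
  fixes f :: "real \<Rightarrow> real"
  assumes diff: "\<And>x. f differentiable (at x)" and cont: "continuous_on UNIV (deriv f)"
    and supp: "closure {x. f x \<noteq> 0} \<subseteq> {a <..< b}" and "a \<le> b"
  shows "\<bar>f x\<bar> \<le> (b - a) / 2 * sup_norm (deriv f)"
proof -
  have "compact (closure {x. f x \<noteq> 0})"
    using bounded_subset[OF bounded_Ioo supp] by (simp add: compact_eq_bounded_closed)
  with cont have deriv_le: "\<bar>deriv f z\<bar> \<le> sup_norm (deriv f)" for z
    by (intro abs_le_sup_norm bounded_range_deriv_if_compact_support)
  have zero: "f y = 0" if "y \<notin> {a <..< b}" for y
  proof (rule ccontr)
    assume "f y \<noteq> 0"
    then have "y \<in> closure {x. f x \<noteq> 0}" by (intro subsetD[OF closure_subset]) simp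
    with supp that show False by blast
  qed
  have DERIV_f: "DERIV f y :> deriv f y" for y
    using diff by (simp add: DERIV_deriv_iff_real_differentiable)
  show ?thesis
  proof (cases "x \<in> {a <..< b}")
    case False
    have "0 \<le> sup_norm (deriv f)" using deriv_le[of x] by linarith
    then show ?thesis using zero[OF False] \<open>a \<le> b\<close> by simp
  next
    case True
    obtain z where "f x - f a = (x - a) * deriv f z"
      using MVT2[of a x f "deriv f"] True DERIV_f by auto
    then have "\<bar>f x\<bar> = (x - a) * \<bar>deriv f z\<bar>"
      using zero[of a] True by (simp add: abs_mult)
    also have "\<dots> \<le> (x - a) * sup_norm (deriv f)"
      using True deriv_le[of z] by (intro mult_left_mono) auto
    finally have left: "\<bar>f x\<bar> \<le> (x - a) * sup_norm (deriv f)" .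
    obtain z' where "f b - f x = (b - x) * deriv f z'"
      using MVT2[of x b f "deriv f"] True DERIV_f by auto
    then have "\<bar>f x\<bar> = \<bar>(b - x) * deriv f z'\<bar>"
      using zero[of b] by simp
    also have "\<dots> = (b - x) * \<bar>deriv f z'\<bar>"
      using True by (simp add: abs_mult)
    also have "\<dots> \<le> (b - x) * sup_norm (deriv f)"
      using True deriv_le[of z'] by (intro mult_left_mono) auto
    finally have right: "\<bar>f x\<bar> \<le> (b - x) * sup_norm (deriv f)" .
    from left right show ?thesis by (simp add: field_simps)
  qed
qed

lemma mult_ln_ratio_perturbation_bounds:
  fixes w \<xi> :: real and p \<theta> \<theta>' :: "nat \<Rightarrow> real"
  assumes xi: "0 < \<xi>" and J: "finite J"
    and disjoint: "\<And>j k. j \<in> J \<Longrightarrow> k \<in> J \<Longrightarrow> p j \<noteq> 0 \<Longrightarrow> p k \<noteq> 0 \<Longrightarrow> j = k"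
    and centre: "\<And>j. j \<in> J \<Longrightarrow> p j \<noteq> 0 \<Longrightarrow> w = 2 * \<xi>"
    and small: "\<And>j. j \<in> J \<Longrightarrow> \<bar>p j\<bar> \<le> \<xi> / 4"
    and theta: "\<forall>j\<in>J. \<theta> j \<in> {0, 1}" and theta': "\<forall>j\<in>J. \<theta>' j \<in> {0, 1}"
  defines "F \<equiv> w + (\<Sum>j\<in>J. (2 * \<theta> j - 1) * p j)"
    and "G \<equiv> w + (\<Sum>j\<in>J. (2 * \<theta>' j - 1) * p j)"
    and "d \<equiv> \<Sum>j\<in>J. 2 * (\<theta> j - \<theta>' j) * p j"
  shows "d \<le> F * ln (F / G) \<and> F * ln (F / G) \<le> d + 5 / (4 * \<xi>) * (\<Sum>j\<in>J. (p j)\<^sup>2)"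
proof -
  have "F - G = (\<Sum>j\<in>J. (2 * \<theta> j - 1) * p j - (2 * \<theta>' j - 1) * p j)"
    unfolding F_def G_def by (simp add: sum_subtractf)
  also have "\<dots> = d"
    unfolding d_def by (intro sum.cong) (simp_all add: algebra_simps)
  finally have "F - G = d" .
  have "0 \<le> 5 / (4 * \<xi>) * (\<Sum>j\<in>J. (p j)\<^sup>2)" using xi by (simp add: sum_nonneg)
  show ?thesis
  proof (cases "\<exists>j\<in>J. \<theta> j \<noteq> \<theta>' j \<and> p j \<noteq> 0")
    case False
    then have "d = 0" unfolding d_def by (intro sum.neutral) auto
    with \<open>F - G = d\<close> have "F = G" by simp
    then show ?thesis using \<open>d = 0\<close> \<open>0 \<le> 5 / (4 * \<xi>) * _\<close> by (cases "F = 0") simp_all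
  next
    case True
    then obtain j0 where j0: "j0 \<in> J" "\<theta> j0 \<noteq> \<theta>' j0" "p j0 \<noteq> 0" by blast
    have others: "p j = 0" if "j \<in> J" "j \<noteq> j0" for j
      using disjoint[OF that(1) j0(1) _ j0(3)] that(2) by blast
    have single: "(\<Sum>j\<in>J. h j (p j)) = h j0 (p j0)" if "\<And>j. h j 0 = 0" for h :: "nat \<Rightarrow> real \<Rightarrow> real"
    proof -
      have "(\<Sum>j\<in>J. h j (p j)) = (\<Sum>j\<in>{j0}. h j (p j))"
        by (intro sum.mono_neutral_right) (simp_all add: J j0(1) others that)
      then show ?thesis by simp
    qed
    define u where "u = (2 * \<theta> j0 - 1) * p j0"
    have theta_j0: "\<theta> j0 \<in> {0, 1}" and "\<theta>' j0 \<in> {0, 1}" using theta theta' j0(1) by auto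
    with j0(2) have theta'_j0: "\<theta>' j0 = 1 - \<theta> j0" by auto
    from theta_j0 have "(2 * \<theta> j0 - 1)\<^sup>2 = 1" by (auto simp: power2_eq_square)
    then have sum_sq: "(\<Sum>j\<in>J. (p j)\<^sup>2) = u\<^sup>2"
      using single[of "\<lambda>j y. y\<^sup>2"] by (simp add: u_def power_mult_distrib)
    have w: "w = 2 * \<xi>" by (rule centre[OF j0(1,3)])
    have F: "F = 2 * \<xi> + u"
      using single[of "\<lambda>j y. (2 * \<theta> j - 1) * y"] by (simp add: F_def u_def w)
    have G: "G = 2 * \<xi> - u"
      using single[of "\<lambda>j y. (2 * \<theta>' j - 1) * y"] theta'_j0
      by (simp add: G_def u_def w algebra_simps)
    have d: "d = 2 * u"
      using single[of "\<lambda>j y. 2 * (\<theta> j - \<theta>' j) * y"] theta'_j0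
      by (simp add: d_def u_def algebra_simps)
    have "\<bar>u\<bar> \<le> \<xi> / 4"
      using small[OF j0(1)] theta_j0 by (auto simp: u_def abs_mult)
    from mult_ln_ratio_bounds[OF xi this] show ?thesis
      unfolding F G d sum_sq by simp
  qed
qed

lemma integral_mult_ln_ratio_perturbation_le:
  fixes \<xi> V :: real and \<omega> :: "real \<Rightarrow> real" and p :: "nat \<Rightarrow> real \<Rightarrow> real"
    and \<theta> \<theta>' :: "nat \<Rightarrow> real"
  assumes xi: "0 < \<xi>" and J: "finite J"
    and \<omega>_measurable: "\<omega> \<in> borel_measurable borel"
    and p_integrable: "\<And>j. j \<in> J \<Longrightarrow> integrable lborel (p j)"
    and p_sq_integrable: "\<And>j. j \<in> J \<Longrightarrow> integrable lborel (\<lambda>x. (p j x)\<^sup>2)"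
    and p_mean: "\<And>j. j \<in> J \<Longrightarrow> (\<integral>x. p j x \<partial>lborel) = 0"
    and p_energy: "\<And>j. j \<in> J \<Longrightarrow> (\<integral>x. (p j x)\<^sup>2 \<partial>lborel) \<le> V"
    and disjoint: "\<And>j k x. j \<in> J \<Longrightarrow> k \<in> J \<Longrightarrow> p j x \<noteq> 0 \<Longrightarrow> p k x \<noteq> 0 \<Longrightarrow> j = k"
    and centre: "\<And>j x. j \<in> J \<Longrightarrow> p j x \<noteq> 0 \<Longrightarrow> \<omega> x = 2 * \<xi>"
    and small: "\<And>j x. j \<in> J \<Longrightarrow> \<bar>p j x\<bar> \<le> \<xi> / 4"
    and theta: "\<forall>j\<in>J. \<theta> j \<in> {0, 1}" and theta': "\<forall>j\<in>J. \<theta>' j \<in> {0, 1}"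
  defines "F \<equiv> \<lambda>x. \<omega> x + (\<Sum>j\<in>J. (2 * \<theta> j - 1) * p j x)"
    and "G \<equiv> \<lambda>x. \<omega> x + (\<Sum>j\<in>J. (2 * \<theta>' j - 1) * p j x)"
  shows "integrable lborel (\<lambda>x. F x * ln (F x / G x))
    \<and> (\<integral>x. F x * ln (F x / G x) \<partial>lborel) \<le> 5 / (4 * \<xi>) * (card J * V)"
proof -
  define h where "h x = F x * ln (F x / G x)" for x
  define d where "d x = (\<Sum>j\<in>J. 2 * (\<theta> j - \<theta>' j) * p j x)" for x
  define S where "S x = (\<Sum>j\<in>J. (p j x)\<^sup>2)" for x
  define K where "K = 5 / (4 * \<xi>)"
  have bounds: "d x \<le> h x \<and> h x \<le> d x + K * S x" for x
    unfolding h_def d_def S_def K_def F_def G_def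
    by (rule mult_ln_ratio_perturbation_bounds[where w = "\<omega> x" and p = "\<lambda>j. p j x",
          OF xi J disjoint centre small theta theta'])
  have d_terms: "integrable lborel (\<lambda>x. 2 * (\<theta> j - \<theta>' j) * p j x)" if "j \<in> J" for j
    using p_integrable[OF that] by simp
  have d_integrable: "integrable lborel d"
    unfolding d_def[abs_def] by (rule Bochner_Integration.integrable_sum) (rule d_terms)
  have "(\<integral>x. d x \<partial>lborel) = (\<Sum>j\<in>J. \<integral>x. 2 * (\<theta> j - \<theta>' j) * p j x \<partial>lborel)"
    unfolding d_def by (rule Bochner_Integration.integral_sum) (rule d_terms)
  also have "\<dots> = 0"
    using p_mean by (intro sum.neutral) simp
  finally have d_integral: "(\<integral>x. d x \<partial>lborel) = 0" .
  have S: "integrable lborel S" "(\<integral>x. S x \<partial>lborel) \<le> card J * V"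
    unfolding S_def[abs_def] using p_sq_integrable p_energy
    by (simp_all add: integral_sum sum_bounded_above)
  have perturbation_measurable:
    "(\<lambda>x. \<omega> x + (\<Sum>j\<in>J. c j * p j x)) \<in> borel_measurable borel" for c :: "nat \<Rightarrow> real"
  proof -
    have "(\<lambda>x. c j * p j x) \<in> borel_measurable borel" if "j \<in> J" for j
      using borel_measurable_integrable[OF p_integrable[OF that]] by simp
    then show ?thesis using \<omega>_measurable by simp
  qed
  have F_G_measurable: "F \<in> borel_measurable borel" "G \<in> borel_measurable borel"
    using perturbation_measurable[of "\<lambda>j. 2 * \<theta> j - 1"]
      perturbation_measurable[of "\<lambda>j. 2 * \<theta>' j - 1"]
    by (simp_all add: F_def G_def)
  have h: "integrable lborel h"
  proof (rule Bochner_Integration.integrable_bound)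
    show "integrable lborel (\<lambda>x. \<bar>d x\<bar> + K * S x)"
      using d_integrable d_integral S(1) by simp
    have "h \<in> borel_measurable borel"
      unfolding h_def[abs_def]
      by (rule borel_measurable_times borel_measurable_ln borel_measurable_divide F_G_measurable)+
    then show "h \<in> borel_measurable lborel" by simp
    have "norm (h x) \<le> norm (\<bar>d x\<bar> + K * S x)" for x
    proof -
      have "0 \<le> K * S x" using xi by (simp add: K_def S_def sum_nonneg)
      with bounds[of x] show ?thesis unfolding real_norm_def by arith
    qed
    then show "AE x in lborel. norm (h x) \<le> norm (\<bar>d x\<bar> + K * S x)"
      by (rule AE_I2)
  qed
  have "integrable lborel (\<lambda>x. d x + K * S x)"
    using d_integrable S(1) by simp
  with h have "(\<integral>x. h x \<partial>lborel) \<le> (\<integral>x. d x + K * S x \<partial>lborel)"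
    by (rule integral_mono) (use bounds in blast)
  also have "\<dots> = (\<integral>x. d x \<partial>lborel) + K * (\<integral>x. S x \<partial>lborel)"
    using d_integrable S(1) by simp
  also have "\<dots> = K * (\<integral>x. S x \<partial>lborel)"
    unfolding d_integral by simp
  also have "\<dots> \<le> K * (card J * V)"
    using S xi by (intro mult_left_mono) (simp_all add: K_def)
  finally have "(\<integral>x. h x \<partial>lborel) \<le> 5 / (4 * \<xi>) * (card J * V)"
    by (simp only: K_def)
  with h show ?thesis
    unfolding h_def[abs_def] by (rule conjI)
qed

lemma phi_j_nonzero_imp_bounds:
  assumes supp: "closure {y. \<phi> y \<noteq> 0} \<subseteq> {1/4 <..< 3/4}"
    and nonzero: "phi_j \<phi> \<beta> \<alpha> \<xi> A D j x \<noteq> 0"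
  shows "real j - 3/4 < real D / \<alpha> * (x + \<alpha> / 2) \<and> real D / \<alpha> * (x + \<alpha> / 2) < real j - 1/4"
proof -
  let ?y = "real D / \<alpha> * (x + \<alpha> / 2) - (real j - 1)"
  have "\<phi> ?y \<noteq> 0" using nonzero by (auto simp: phi_j_def)
  then have "?y \<in> closure {y. \<phi> y \<noteq> 0}" by (intro subsetD[OF closure_subset]) simp
  with supp have "?y \<in> {1/4 <..< 3/4}" by blast
  then have "1/4 < ?y" "?y < 3/4" by (simp_all only: greaterThanLessThan_iff)
  then show ?thesis by (intro conjI; linarith)
qed

lemma phi_j_disjoint:
  assumes "closure {y. \<phi> y \<noteq> 0} \<subseteq> {1/4 <..< 3/4}"
    and "phi_j \<phi> \<beta> \<alpha> \<xi> A D j x \<noteq> 0" "phi_j \<phi> \<beta> \<alpha> \<xi> A D k x \<noteq> 0"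
  shows "j = k"
proof -
  have "real j < real k + 1" "real k < real j + 1"
    using phi_j_nonzero_imp_bounds[OF assms(1,2)] phi_j_nonzero_imp_bounds[OF assms(1,3)] by linarith+
  then have "j < Suc k" "k < Suc j" by (simp_all only: of_nat_Suc[symmetric] of_nat_less_iff)
  then show ?thesis by simp
qed

lemma phi_j_nonzero_imp_abs_lt:
  assumes "closure {y. \<phi> y \<noteq> 0} \<subseteq> {1/4 <..< 3/4}" and \<alpha>: "0 < \<alpha>"
    and j: "j \<in> {1..D}" and "phi_j \<phi> \<beta> \<alpha> \<xi> A D j x \<noteq> 0"
  shows "\<bar>x\<bar> < \<alpha> / 2"
proof -
  let ?s = "real D / \<alpha> * (x + \<alpha> / 2)"
  have "1 \<le> real j" "real j \<le> real D" using j by simp_all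
  with phi_j_nonzero_imp_bounds[OF assms(1,4)] have "0 < ?s" "?s < real D"
    by linarith+
  have pos: "0 < real D / \<alpha>" using \<alpha> j by simp
  have "0 < x + \<alpha> / 2" by (rule zero_less_mult_pos[OF \<open>0 < ?s\<close> pos])
  moreover have "?s < real D / \<alpha> * \<alpha>" using \<open>?s < real D\<close> \<alpha> by simp
  then have "x + \<alpha> / 2 < \<alpha>" by (rule mult_less_cancel_left_pos[OF pos, THEN iffD1])
  ultimately have "0 < x + \<alpha> / 2" "x + \<alpha> / 2 < \<alpha>" .
  then show ?thesis by auto
qed

lemma abs_phi_j_le:
  assumes "\<And>y. \<bar>\<phi> y\<bar> \<le> A / 4" and "0 < A" "0 \<le> \<xi>" "0 < \<beta>" "0 < D"
  shows "\<bar>phi_j \<phi> \<beta> \<alpha> \<xi> A D j x\<bar> \<le> \<xi> / 4"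
proof -
  have "real D powr (- \<beta>) \<le> real D powr 0"
    using assms by (intro powr_mono) auto
  then have "real D powr (- \<beta>) \<le> 1" using assms by simp
  then have "\<xi> * real D powr (- \<beta>) / A * \<bar>\<phi> (real D / \<alpha> * (x + \<alpha> / 2) - (real j - 1))\<bar>
      \<le> \<xi> * 1 / A * (A / 4)"
    using assms by (intro mult_mono divide_right_mono mult_left_mono) auto
  then show ?thesis using assms by (simp add: phi_j_def abs_mult)
qed

lemma phi_j_integrals:
  fixes \<phi> :: "real \<Rightarrow> real" and \<alpha> \<beta> \<xi> A :: real
  assumes \<alpha>: "0 < \<alpha>" and D: "0 < D"
    and "integrable lborel \<phi>" "integrable lborel (\<lambda>y. (\<phi> y)\<^sup>2)"
  defines "c \<equiv> \<xi> * real D powr (- \<beta>) / A"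
  shows "integrable lborel (phi_j \<phi> \<beta> \<alpha> \<xi> A D j)"
    and "(\<integral>x. phi_j \<phi> \<beta> \<alpha> \<xi> A D j x \<partial>lborel) = c * (\<alpha> / D) * (\<integral>y. \<phi> y \<partial>lborel)"
    and "integrable lborel (\<lambda>x. (phi_j \<phi> \<beta> \<alpha> \<xi> A D j x)\<^sup>2)"
    and "(\<integral>x. (phi_j \<phi> \<beta> \<alpha> \<xi> A D j x)\<^sup>2 \<partial>lborel) = c\<^sup>2 * (\<alpha> / D) * (\<integral>y. (\<phi> y)\<^sup>2 \<partial>lborel)"
proof -
  have arg: "real D / \<alpha> * (x + \<alpha> / 2) - (real j - 1) = (real D / 2 - (real j - 1)) + real D / \<alpha> * x"
    for x using \<alpha> by (simp add: field_simps)
  have scale: "real D / \<alpha> \<noteq> 0" using \<alpha> D by simp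
  have rescaled: "integrable lborel (\<lambda>x. h (real D / \<alpha> * (x + \<alpha> / 2) - (real j - 1)))"
    "(\<integral>x. h (real D / \<alpha> * (x + \<alpha> / 2) - (real j - 1)) \<partial>lborel) = \<alpha> / D * (\<integral>y. h y \<partial>lborel)"
    if "integrable lborel h" for h :: "real \<Rightarrow> real"
  proof -
    let ?t = "real D / 2 - (real j - 1)"
    show "integrable lborel (\<lambda>x. h (real D / \<alpha> * (x + \<alpha> / 2) - (real j - 1)))"
      unfolding arg by (rule lborel_integrable_real_affine[OF that scale])
    have "(\<integral>y. h y \<partial>lborel) = \<bar>real D / \<alpha>\<bar> *\<^sub>R (\<integral>x. h (?t + real D / \<alpha> * x) \<partial>lborel)"
      by (rule lborel_integral_real_affine[OF scale])
    then show "(\<integral>x. h (real D / \<alpha> * (x + \<alpha> / 2) - (real j - 1)) \<partial>lborel) = \<alpha> / D * (\<integral>y. h y \<partial>lborel)"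
      unfolding arg using \<alpha> D by simp
  qed
  have phi_j_eq: "phi_j \<phi> \<beta> \<alpha> \<xi> A D j x = c * \<phi> (real D / \<alpha> * (x + \<alpha> / 2) - (real j - 1))" for x
    unfolding phi_j_def c_def by simp
  show "integrable lborel (phi_j \<phi> \<beta> \<alpha> \<xi> A D j)"
    "(\<integral>x. phi_j \<phi> \<beta> \<alpha> \<xi> A D j x \<partial>lborel) = c * (\<alpha> / D) * (\<integral>y. \<phi> y \<partial>lborel)"
    using rescaled[OF assms(3)] by (simp_all add: phi_j_eq[abs_def])
  show "integrable lborel (\<lambda>x. (phi_j \<phi> \<beta> \<alpha> \<xi> A D j x)\<^sup>2)"
    "(\<integral>x. (phi_j \<phi> \<beta> \<alpha> \<xi> A D j x)\<^sup>2 \<partial>lborel) = c\<^sup>2 * (\<alpha> / D) * (\<integral>y. (\<phi> y)\<^sup>2 \<partial>lborel)"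
    using rescaled[OF assms(4)] by (simp_all add: phi_j_eq power_mult_distrib)
qed

lemma sup_norm_deriv_le_Max_sup_norm_nderiv:
  "sup_norm (deriv f) \<le> Max ((\<lambda>k. sup_norm (nderiv k f)) ` {0 .. n + 1})"
  by (rule Max_ge) (auto intro: image_eqI[of _ _ 1])

lemma T_class_centre:
  assumes "\<omega> \<in> T_class \<alpha> \<xi>" and "\<bar>x\<bar> < \<alpha> / 2"
  shows "\<omega> x = 2 * \<xi>"
proof -
  have "x \<in> {- 3 * \<alpha> / 4 .. 3 * \<alpha> / 4}" using assms(2) by auto
  then show ?thesis using assms(1) unfolding T_class_def by blast
qed

lemma H_class_measurable:
  "f \<in> H_class \<beta> \<gamma> lp L \<epsilon> C \<alpha> \<xi> M \<Longrightarrow> f \<in> borel_measurable borel"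
  by (simp add: H_class_def)

theorem lemma6:
  fixes \<beta> \<alpha> \<xi> A Lt_eps Ct Mt :: real
    and Lt :: "real \<Rightarrow> real"
    and \<phi> \<omega> :: "real \<Rightarrow> real"
    and D :: nat
    and \<theta> \<theta>' :: "nat \<Rightarrow> real"
  assumes beta_pos: "0 < \<beta>" and alpha_pos: "0 < \<alpha>" and xi_pos: "0 < \<xi>"
    and phi_smooth: "infinitely_differentiable \<phi>"
    and phi_supp: "closure {x. \<phi> x \<noteq> 0} \<subseteq> {1/4 <..< 3/4}"
    and phi_int: "integrable lborel \<phi>" "(\<integral>x. \<phi> x \<partial>lborel) = 0"
    and phi_sq: "integrable lborel (\<lambda>x. (\<phi> x)\<^sup>2)" "(\<integral>x. (\<phi> x)\<^sup>2 \<partial>lborel) = 1"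
    and A_def: "A = Max ((\<lambda>k. sup_norm (nderiv k \<phi>)) ` {0 .. hr \<beta> + 1})"
    and A_gt1: "1 < A"
    and omega_T: "\<omega> \<in> T_class \<alpha> \<xi>"
    and omega_H: "\<omega> \<in> H_class \<beta> (\<alpha> / 4) (ln (2 * \<xi>)) Lt Lt_eps Ct \<alpha> \<xi> Mt"
    and D_pos: "0 < D" and D_even: "even D"
    and theta: "\<forall>j\<in>{1..D}. \<theta> j \<in> {0, 1}"
    and theta': "\<forall>j\<in>{1..D}. \<theta>' j \<in> {0, 1}"
  shows "integrable lborel (\<lambda>x. f_theta \<omega> \<phi> \<beta> \<alpha> \<xi> A D \<theta> x *
            ln (f_theta \<omega> \<phi> \<beta> \<alpha> \<xi> A D \<theta> x / f_theta \<omega> \<phi> \<beta> \<alpha> \<xi> A D \<theta>' x))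
       \<and> KL (f_theta \<omega> \<phi> \<beta> \<alpha> \<xi> A D \<theta>) (f_theta \<omega> \<phi> \<beta> \<alpha> \<xi> A D \<theta>')
           \<le> 5 * \<xi> * \<alpha> / (4 * A\<^sup>2) * real D powr (- 2 * \<beta>)"
proof -
  define c where "c = \<xi> * real D powr (- \<beta>) / A"
  have "sup_norm (deriv \<phi>) \<le> A"
    unfolding A_def by (rule sup_norm_deriv_le_Max_sup_norm_nderiv)
  then have phi_le: "\<bar>\<phi> y\<bar> \<le> A / 4" for y
    using abs_le_half_width_sup_norm_deriv[OF infinitely_differentiable_imp_differentiable[OF phi_smooth]
        infinitely_differentiable_imp_continuous_deriv[OF phi_smooth] phi_supp, of y] by simp
  note bump_integrals = phi_j_integrals[OF alpha_pos D_pos phi_int(1) phi_sq(1)]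
  have "integrable lborel (\<lambda>x. f_theta \<omega> \<phi> \<beta> \<alpha> \<xi> A D \<theta> x *
            ln (f_theta \<omega> \<phi> \<beta> \<alpha> \<xi> A D \<theta> x / f_theta \<omega> \<phi> \<beta> \<alpha> \<xi> A D \<theta>' x))
      \<and> KL (f_theta \<omega> \<phi> \<beta> \<alpha> \<xi> A D \<theta>) (f_theta \<omega> \<phi> \<beta> \<alpha> \<xi> A D \<theta>')
          \<le> 5 / (4 * \<xi>) * (card {1..D} * (c\<^sup>2 * (\<alpha> / D)))"
    unfolding KL_def f_theta_def
  proof (intro integral_mult_ln_ratio_perturbation_le[OF xi_pos _ H_class_measurable[OF omega_H]])
    show "(\<integral>x. (phi_j \<phi> \<beta> \<alpha> \<xi> A D j x)\<^sup>2 \<partial>lborel) \<le> c\<^sup>2 * (\<alpha> / D)" for j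
      using bump_integrals(4) phi_sq(2) by (simp add: c_def)
    show "\<bar>phi_j \<phi> \<beta> \<alpha> \<xi> A D j x\<bar> \<le> \<xi> / 4" for j x
      using abs_phi_j_le[OF phi_le] A_gt1 xi_pos beta_pos D_pos by simp
  qed (use phi_int(2) bump_integrals phi_j_disjoint[OF phi_supp] theta theta'
      T_class_centre[OF omega_T phi_j_nonzero_imp_abs_lt[OF phi_supp alpha_pos]] in auto)
  also have "5 / (4 * \<xi>) * (card {1..D} * (c\<^sup>2 * (\<alpha> / D)))
      = 5 * \<xi> * \<alpha> / (4 * A\<^sup>2) * real D powr (- 2 * \<beta>)"
  proof -
    have "(real D powr - \<beta>)\<^sup>2 = real D powr (- 2 * \<beta>)"
      using D_pos by (simp add: powr_power)
    then show ?thesis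
      using xi_pos D_pos by (simp add: c_def power_divide power_mult_distrib power2_eq_square)
  qed
  finally show ?thesis .
qed

end
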